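(* Let $g_1, g_2$ be integers with $g_1 > g_2 \geq 2$, and let $\beta > 0$ be a real number. Let $(a_n)_{n\geq 1}$ be a sequence of positive integers with $a_1 \geq 2$ and $a_{n+1} = a_n^{1+\beta}$ for all $n \geq 1$. Define $$\theta_1 = \sum_{n=1}^{\infty} \frac{1}{g_1^{a_n}}, \qquad \theta_2 = \sum_{n=1}^{\infty} \frac{1}{g_2^{a_n}}.$$ Then each of the real numbers $\theta_1 + \theta_2$, $\theta_1 - \theta_2$, $\theta_1 \theta_2$ and $\theta_1/\theta_2$ is transcendental. *)

theory Defs
  imports Complex_Main "HOL-Computational_Algebra.Polynomial"
begin

end

theory Submission
  imports Defs "HOL-Real_Asymp.Real_Asymp"
begin

text \<open>The partial sums \<open>S\<^sub>i(N)\<close> of the two series have denominator \<open>g\<^sub>i\<^bsup>a\<^sub>N\<^esup>\<close>, so each of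
  \<open>S\<^sub>1 \<plusminus> S\<^sub>2\<close>, \<open>S\<^sub>1 S\<^sub>2\<close>, \<open>S\<^sub>1 / S\<^sub>2\<close> is a rational with denominator at most \<open>(g\<^sub>1 g\<^sub>2)\<^bsup>a\<^sub>N\<^esup>\<close>,
  while its distance to the corresponding combination of \<open>\<theta>\<^sub>1, \<theta>\<^sub>2\<close> is \<open>O(g\<^sub>2\<^bsup>-a\<^sub>N\<^sub>+\<^sub>1\<^esup>)\<close>.
  As \<open>a\<^sub>N\<^sub>+\<^sub>1 = a\<^sub>N\<^bsup>1+\<beta>\<^esup>\<close> grows superlinearly in \<open>a\<^sub>N\<close>, these approximations beat every power
  of the denominator, and Liouville's argument shows that the combinations are transcendental.
  The approximations never hit the limit: the tails are positive, and for the difference and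
  the quotient the tail of \<open>\<theta>\<^sub>1\<close> is eventually negligible against that of \<open>\<theta>\<^sub>2\<close> since \<open>g\<^sub>1 > g\<^sub>2\<close>.\<close>

lemma poly_bounded_by_dist_near_root:
  fixes P :: "real poly"
  assumes "poly P x = 0"
  obtains M where "M > 0" "\<And>y. \<bar>y - x\<bar> \<le> 1 \<Longrightarrow> \<bar>poly P y\<bar> \<le> M * \<bar>y - x\<bar>"
proof -
  from assms obtain Q where Q: "P = [:-x, 1:] * Q"
    by (auto simp: poly_eq_0_iff_dvd elim!: dvdE)
  have "\<exists>M. (\<forall>y. x - 1 \<le> y \<and> y \<le> x + 1 \<longrightarrow> \<bar>poly Q y\<bar> \<le> M)
          \<and> (\<exists>y. x - 1 \<le> y \<and> y \<le> x + 1 \<and> \<bar>poly Q y\<bar> = M)"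
    by (rule isCont_eq_Ub) auto
  then obtain M where M: "\<And>y. x - 1 \<le> y \<Longrightarrow> y \<le> x + 1 \<Longrightarrow> \<bar>poly Q y\<bar> \<le> M"
    by blast
  show ?thesis
  proof (rule that[of "max M 1"])
    fix y assume "\<bar>y - x\<bar> \<le> 1"
    then have "\<bar>poly Q y\<bar> \<le> max M 1"
      using M[of y] by (auto simp: abs_le_iff)
    then have "\<bar>y - x\<bar> * \<bar>poly Q y\<bar> \<le> \<bar>y - x\<bar> * max M 1"
      by (rule mult_left_mono) auto
    then show "\<bar>poly P y\<bar> \<le> max M 1 * \<bar>y - x\<bar>"
      by (simp add: Q abs_mult[symmetric] mult.commute left_diff_distrib)
  qed auto
qed

lemma power_degree_mult_poly_of_int_div_Ints:
  fixes P :: "real poly" and p q :: int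
  assumes "\<And>i. coeff P i \<in> \<int>" "q \<noteq> 0"
  shows "of_int q ^ degree P * poly P (of_int p / of_int q) \<in> \<int>"
proof -
  have "of_int q ^ degree P * poly P (of_int p / of_int q)
      = (\<Sum>i\<le>degree P. coeff P i * (of_int p ^ i * of_int q ^ (degree P - i)))"
    unfolding poly_altdef sum_distrib_left
  proof (rule sum.cong)
    fix i assume "i \<in> {..degree P}"
    then have "real_of_int q ^ degree P = of_int q ^ i * of_int q ^ (degree P - i)"
      by (simp add: power_add[symmetric])
    then show "of_int q ^ degree P * (coeff P i * (of_int p / of_int q) ^ i)
        = coeff P i * (of_int p ^ i * of_int q ^ (degree P - i))"
      using assms(2) by (simp add: power_divide field_simps)
  qed simp
  also have "\<dots> \<in> \<int>"
    using assms(1) by (intro Ints_sum Ints_mult Ints_power) auto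
  finally show ?thesis .
qed

text \<open>Liouville's argument: if \<open>P(x) = 0\<close> with \<open>P \<noteq> 0\<close> of degree \<open>d\<close> and \<open>P(p/q) \<noteq> 0\<close>,
  then \<open>1 \<le> q\<^sup>d \<bar>P(p/q)\<bar> \<le> M q\<^sup>d \<bar>x - p/q\<bar>\<close>, which fails for good enough approximations.\<close>

lemma not_algebraic_if_rapid_rational_approx:
  fixes x :: real and r Q :: "nat \<Rightarrow> real"
  assumes rational: "\<And>n. \<exists>p q :: int. 1 \<le> q \<and> of_int q \<le> Q n \<and> r n = of_int p / of_int q"
    and approx_ne: "eventually (\<lambda>n. r n \<noteq> x) sequentially"
    and rapid: "\<And>k. (\<lambda>n. \<bar>x - r n\<bar> * Q n ^ k) \<longlonglongrightarrow> 0"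
  shows "\<not> algebraic x"
proof
  assume "algebraic x"
  then obtain P where P_Ints: "\<And>i. coeff P i \<in> \<int>" and "P \<noteq> 0" and "poly P x = 0"
    unfolding algebraic_def by blast
  obtain M where "M > 0" and M: "\<And>y. \<bar>y - x\<bar> \<le> 1 \<Longrightarrow> \<bar>poly P y\<bar> \<le> M * \<bar>y - x\<bar>"
    using poly_bounded_by_dist_near_root[OF \<open>poly P x = 0\<close>] by blast
  define R where "R = {y. poly P y = 0} - {x}"
  have "finite R"
    using poly_roots_finite[OF \<open>P \<noteq> 0\<close>] by (simp add: R_def)
  have close: "eventually (\<lambda>n. \<bar>x - r n\<bar> < c) sequentially" if "c > 0" for c
    using order_tendstoD(2)[OF rapid[of 0] that] by simp
  have "eventually (\<lambda>n. \<forall>y\<in>R. r n \<noteq> y) sequentially"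
  proof (rule eventually_ball_finite[OF \<open>finite R\<close>], rule ballI)
    fix y assume "y \<in> R"
    then have "\<bar>y - x\<bar> > 0" by (auto simp: R_def)
    from close[OF this] show "eventually (\<lambda>n. r n \<noteq> y) sequentially"
      by eventually_elim auto
  qed
  moreover have "eventually (\<lambda>n. \<bar>x - r n\<bar> * Q n ^ degree P < 1 / M) sequentially"
    using order_tendstoD(2)[OF rapid] \<open>M > 0\<close> by simp
  ultimately have "eventually (\<lambda>n. (\<forall>y\<in>R. r n \<noteq> y) \<and> r n \<noteq> x \<and> \<bar>x - r n\<bar> < 1
      \<and> \<bar>x - r n\<bar> * Q n ^ degree P < 1 / M) sequentially"
    using approx_ne close[of 1] by (simp add: eventually_conj_iff)
  then obtain n where n: "\<forall>y\<in>R. r n \<noteq> y" "r n \<noteq> x" "\<bar>x - r n\<bar> < 1"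
      "\<bar>x - r n\<bar> * Q n ^ degree P < 1 / M"
    by (auto dest: eventually_happens)
  obtain p q :: int where pq: "1 \<le> q" "of_int q \<le> Q n" "r n = of_int p / of_int q"
    using rational[of n] by blast
  have "poly P (r n) \<noteq> 0" using n(1,2) by (auto simp: R_def)
  then have "of_int q ^ degree P * poly P (r n) \<noteq> 0" using pq(1) by simp
  moreover have "of_int q ^ degree P * poly P (r n) \<in> \<int>"
    using power_degree_mult_poly_of_int_div_Ints[OF P_Ints, of q p] pq by simp
  ultimately have "1 \<le> \<bar>of_int q ^ degree P * poly P (r n)\<bar>"
    by (simp add: Ints_nonzero_abs_ge1)
  also have "\<dots> = of_int q ^ degree P * \<bar>poly P (r n)\<bar>"
    using pq(1) by (simp add: abs_mult)
  also have "\<dots> \<le> Q n ^ degree P * (M * \<bar>x - r n\<bar>)"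
  proof (rule mult_mono)
    show "of_int q ^ degree P \<le> Q n ^ degree P" using pq by (intro power_mono) auto
    show "\<bar>poly P (r n)\<bar> \<le> M * \<bar>x - r n\<bar>"
      using M[of "r n"] n(3) by (simp add: abs_minus_commute)
  qed (use pq in auto)
  also have "\<dots> < 1"
    using n(4) \<open>M > 0\<close> by (simp add: less_divide_eq ac_simps)
  finally show False by simp
qed

lemma power_div_power_iterated_powr_tendsto_0:
  fixes c d \<beta> :: real and A :: "nat \<Rightarrow> nat"
  assumes "c > 0" "d > 1" "\<beta> > 0" "filterlim A at_top sequentially"
    and A_Suc: "\<And>n. real (A (Suc n)) = real (A n) powr (1 + \<beta>)"
  shows "(\<lambda>n. c ^ A n / d ^ A (Suc n)) \<longlonglongrightarrow> 0"
proof -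
  have "((\<lambda>t. exp (ln c * t - ln d * t powr (1 + \<beta>))) \<longlongrightarrow> 0) at_top"
    using assms by real_asymp
  then have "(\<lambda>n. exp (ln c * real (A n) - ln d * real (A n) powr (1 + \<beta>))) \<longlonglongrightarrow> 0"
    by (rule filterlim_compose) (rule filterlim_compose[OF filterlim_real_sequentially assms(4)])
  moreover have "exp (ln c * real (A n) - ln d * real (A n) powr (1 + \<beta>)) = c ^ A n / d ^ A (Suc n)" for n
  proof -
    have "c ^ A n = exp (ln c * real (A n))" "d ^ A (Suc n) = exp (ln d * real (A (Suc n)))"
      using assms(1,2) by (simp_all add: powr_realpow[symmetric] powr_def mult.commute)
    then show ?thesis by (simp add: A_Suc exp_diff)
  qed
  ultimately show ?thesis by simp
qed

lemma strict_mono_add_le: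
  fixes A :: "nat \<Rightarrow> nat"
  assumes "strict_mono A"
  shows "A k + m \<le> A (m + k)"
proof (induction m)
  case (Suc m)
  have "A (m + k) < A (Suc m + k)" using assms by (simp add: strict_mono_def)
  then show ?case using Suc by simp
qed simp

locale lacunary_series =
  fixes g :: int and A :: "nat \<Rightarrow> nat"
  assumes base_ge_2: "g \<ge> 2" and strict_mono_exponents: "strict_mono A"
    and first_exponent_pos: "A 0 \<ge> 1"
begin

definition total :: real where
  "total = (\<Sum>n. 1 / of_int g ^ A n)"

definition partial :: "nat \<Rightarrow> real" where
  "partial N = (\<Sum>n\<le>N. 1 / of_int g ^ A n)"

definition tail :: "nat \<Rightarrow> real" where
  "tail N = total - partial N"

lemma base_power_pos: "(of_int g :: real) ^ k > 0"
  using base_ge_2 by simp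

lemma base_power_nonzero: "(of_int g :: real) ^ k \<noteq> 0"
  using base_ge_2 by simp

lemma term_shift_le: "1 / (of_int g :: real) ^ A (m + k) \<le> (1 / 2) ^ m / of_int g ^ A k"
proof -
  have "of_int g ^ A k * 2 ^ m \<le> of_int g ^ A k * (of_int g :: real) ^ m"
    using base_ge_2 by (intro mult_left_mono power_mono) auto
  also have "\<dots> \<le> of_int g ^ A (m + k)"
    unfolding power_add[symmetric]
    using strict_mono_add_le[OF strict_mono_exponents] base_ge_2 by (intro power_increasing) auto
  finally show ?thesis
    using base_power_pos by (simp add: power_divide field_simps)
qed

lemma summable_shift: "summable (\<lambda>m. 1 / (of_int g :: real) ^ A (m + k))"
proof (rule summable_comparison_test'[where N = 0])
  show "summable (\<lambda>m. (1 / 2) ^ m / (of_int g :: real) ^ A k)"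
    by (intro summable_divide summable_geometric) simp
  show "norm (1 / (of_int g :: real) ^ A (m + k)) \<le> (1 / 2) ^ m / of_int g ^ A k" for m
    using term_shift_le[of m k] base_power_pos[of "A (m + k)"] by simp
qed

lemma suminf_shift_le: "(\<Sum>m. 1 / of_int g ^ A (m + k)) \<le> 2 / (of_int g :: real) ^ A k"
proof -
  have "(\<Sum>m. 1 / of_int g ^ A (m + k)) \<le> (\<Sum>m. (1 / 2) ^ m / (of_int g :: real) ^ A k)"
    using term_shift_le summable_shift by (intro suminf_le summable_divide summable_geometric) auto
  also have "\<dots> = 2 / of_int g ^ A k"
    by (subst suminf_divide) (auto simp: suminf_geometric intro: summable_geometric)
  finally show ?thesis .
qed

lemma tail_eq_suminf: "tail N = (\<Sum>m. 1 / of_int g ^ A (m + Suc N))"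
  using suminf_split_initial_segment[OF summable_shift[of 0], of "Suc N"]
  by (simp add: tail_def total_def partial_def lessThan_Suc_atMost)

lemma tail_ge: "tail N \<ge> 1 / of_int g ^ A (Suc N)"
proof -
  have "(\<Sum>m\<in>{0}. 1 / of_int g ^ A (m + Suc N)) \<le> (\<Sum>m. 1 / (of_int g :: real) ^ A (m + Suc N))"
    using summable_shift[of "Suc N"] base_power_pos by (intro sum_le_suminf) (auto intro: less_imp_le)
  then show ?thesis by (simp add: tail_eq_suminf)
qed

lemma tail_le: "tail N \<le> 2 / of_int g ^ A (Suc N)"
  using suminf_shift_le[of "Suc N"] by (simp add: tail_eq_suminf)

lemma tail_pos: "tail N > 0"
  using tail_ge[of N] base_power_pos[of "A (Suc N)"] by (meson divide_pos_pos less_le_trans zero_less_one)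

lemma total_le_1: "total \<le> 1"
proof -
  have "2 \<le> g ^ A 0"
    using power_increasing[of 1 "A 0" g] base_ge_2 first_exponent_pos by simp
  then have "2 \<le> (of_int g :: real) ^ A 0"
    by (metis of_int_le_iff of_int_numeral of_int_power)
  then have "2 / (of_int g :: real) ^ A 0 \<le> 1"
    by simp
  with suminf_shift_le[of 0] show ?thesis
    by (simp add: total_def)
qed

lemma partial_ge: "partial N \<ge> 1 / of_int g ^ A 0"
  unfolding partial_def using base_power_pos by (intro member_le_sum) (auto intro: less_imp_le)

lemma partial_pos: "partial N > 0"
  using partial_ge[of N] base_power_pos[of "A 0"] by (meson divide_pos_pos less_le_trans zero_less_one)

lemma tail_less_1: "tail N < 1"
  using partial_pos[of N] total_le_1 by (simp add: tail_def)

lemma partial_le_1: "partial N \<le> 1"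
  using tail_pos[of N] total_le_1 by (simp add: tail_def)

lemma partial_eq_int_div:
  "\<exists>P :: int. 1 \<le> P \<and> P \<le> g ^ A N \<and> partial N = of_int P / of_int g ^ A N"
proof -
  define P where "P = (\<Sum>n\<le>N. g ^ (A N - A n))"
  have partial_eq: "partial N = of_int P / of_int g ^ A N"
    unfolding P_def partial_def of_int_sum sum_divide_distrib
  proof (rule sum.cong)
    fix n assume "n \<in> {..N}"
    then have "A n \<le> A N" using strict_mono_exponents by (simp add: strict_mono_less_eq)
    then have "(of_int g :: real) ^ A N = of_int g ^ (A N - A n) * of_int g ^ A n"
      by (metis le_add_diff_inverse2 power_add)
    then show "1 / of_int g ^ A n = of_int (g ^ (A N - A n)) / (of_int g :: real) ^ A N"
      using base_power_pos[of "A n"] base_ge_2 by (simp add: field_simps)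
  qed simp
  have "of_int P = partial N * of_int g ^ A N"
    using partial_eq base_power_pos[of "A N"] base_ge_2 by simp
  then have "0 < (of_int P :: real)"
    using partial_pos[of N] base_power_pos[of "A N"] by simp
  then have "1 \<le> P" by simp
  moreover have "P \<le> g ^ A N"
    using partial_le_1[of N] base_power_pos[of "A N"]
    by (simp add: partial_eq divide_le_eq flip: of_int_le_iff)
  ultimately show ?thesis using partial_eq by blast
qed

end

locale lacunary_pair =
  fixes g1 g2 :: int and \<beta> :: real and A :: "nat \<Rightarrow> nat"
  assumes g2_ge_2: "g2 \<ge> 2" and g2_less_g1: "g2 < g1" and \<beta>_pos: "\<beta> > 0"
    and first_exponent_ge_2: "A 0 \<ge> 2"
    and exponent_Suc: "\<And>n. real (A (Suc n)) = real (A n) powr (1 + \<beta>)"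
begin

lemma exponent_less_Suc_if_ge_2:
  assumes "A n \<ge> 2"
  shows "A n < A (Suc n)"
proof -
  have "real (A n) = real (A n) powr 1"
    using assms by simp
  also have "\<dots> < real (A n) powr (1 + \<beta>)"
    using assms \<beta>_pos by (intro powr_less_mono) auto
  finally show ?thesis
    using exponent_Suc[of n] by simp
qed

lemma exponent_ge_2: "A n \<ge> 2"
proof (induction n)
  case (Suc n)
  then show ?case using exponent_less_Suc_if_ge_2[of n] by simp
qed (rule first_exponent_ge_2)

lemma strict_mono_exponents: "strict_mono A"
  using exponent_less_Suc_if_ge_2[OF exponent_ge_2] by (simp add: strict_mono_Suc_iff)

sublocale L1: lacunary_series g1 A
  by unfold_locales (use g2_ge_2 g2_less_g1 strict_mono_exponents first_exponent_ge_2 in auto)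

sublocale L2: lacunary_series g2 A
  by unfold_locales (use g2_ge_2 strict_mono_exponents first_exponent_ge_2 in auto)

definition err :: "nat \<Rightarrow> real" where
  "err N = 1 / of_int g2 ^ A (Suc N)"

definition denom :: "nat \<Rightarrow> int" where
  "denom N = (g1 * g2) ^ A N"

lemma err_pos: "err N > 0"
  using L2.base_power_pos by (simp add: err_def)

lemma tail1_le_err: "L1.tail N \<le> 2 * err N"
proof -
  have "(of_int g2 :: real) ^ A (Suc N) \<le> of_int g1 ^ A (Suc N)"
    using g2_ge_2 g2_less_g1 by (intro power_mono) auto
  then have "2 / (of_int g1 :: real) ^ A (Suc N) \<le> 2 / of_int g2 ^ A (Suc N)"
    using L1.base_power_pos L2.base_power_pos by (intro divide_left_mono) auto
  then show ?thesis using L1.tail_le[of N] by (simp add: err_def)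
qed

lemma tail2_le_err: "L2.tail N \<le> 2 * err N"
  using L2.tail_le[of N] by (simp add: err_def)

lemma err_le_tail2: "err N \<le> L2.tail N"
  using L2.tail_ge[of N] by (simp add: err_def)

text \<open>The first tail is smaller by the factor \<open>(g\<^sub>2/g\<^sub>1)\<^bsup>A(N+1)\<^esup> \<longrightarrow> 0\<close>.\<close>

lemma eventually_tail1_less_err:
  assumes "c > 0"
  shows "eventually (\<lambda>N. L1.tail N < c * err N) sequentially"
proof -
  define \<rho> where "\<rho> = of_int g2 / (of_int g1 :: real)"
  have "0 < \<rho>" "\<rho> < 1" using g2_ge_2 g2_less_g1 by (auto simp: \<rho>_def)
  have "filterlim (\<lambda>N. A (Suc N)) at_top sequentially"
    using strict_mono_exponents
    by (intro filterlim_subseq) (simp add: strict_mono_Suc_iff)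
  then have "(\<lambda>N. \<rho> ^ A (Suc N)) \<longlonglongrightarrow> 0"
    using \<open>0 < \<rho>\<close> \<open>\<rho> < 1\<close> by (intro filterlim_compose[OF LIMSEQ_power_zero]) auto
  then have "eventually (\<lambda>N. \<rho> ^ A (Suc N) < c / 2) sequentially"
    using \<open>c > 0\<close> by (intro order_tendstoD) auto
  then show ?thesis
  proof eventually_elim
    case (elim N)
    have "L1.tail N \<le> 2 / of_int g1 ^ A (Suc N)"
      by (rule L1.tail_le)
    also have "\<dots> = 2 * \<rho> ^ A (Suc N) * err N"
      using g2_ge_2 g2_less_g1 by (simp add: \<rho>_def err_def power_divide)
    also have "\<dots> < c * err N"
      using elim err_pos[of N] by simp
    finally show ?case .
  qed
qed

lemma denom_ge_1: "denom N \<ge> 1"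
proof -
  have "1 \<le> g1" "1 \<le> g2"
    using g2_ge_2 g2_less_g1 by linarith+
  then have "1 * 1 \<le> g1 * g2"
    by (intro mult_mono) auto
  then show ?thesis
    unfolding denom_def by (intro one_le_power) simp
qed

lemma err_mult_denom_power_tendsto_0: "(\<lambda>N. err N * of_int (denom N) ^ k) \<longlonglongrightarrow> 0"
proof -
  have "(of_int (g1 * g2) :: real) ^ k > 0" "(of_int g2 :: real) > 1"
    using g2_ge_2 g2_less_g1 by simp_all
  then have "(\<lambda>N. (of_int (g1 * g2) ^ k) ^ A N / of_int g2 ^ A (Suc N)) \<longlonglongrightarrow> (0 :: real)"
    using \<beta>_pos filterlim_subseq[OF strict_mono_exponents] exponent_Suc
    by (rule power_div_power_iterated_powr_tendsto_0)
  moreover have "(of_int (g1 * g2) ^ k) ^ A N / of_int g2 ^ A (Suc N) = err N * of_int (denom N) ^ k" for N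
    by (simp add: err_def denom_def mult.commute flip: power_mult)
  ultimately show ?thesis
    by simp
qed

lemma not_algebraic_if_approx:
  fixes x K :: real and r :: "nat \<Rightarrow> real"
  assumes "\<And>N. \<exists>p q :: int. 1 \<le> q \<and> q \<le> denom N \<and> r N = of_int p / of_int q"
    and "eventually (\<lambda>N. r N \<noteq> x) sequentially"
    and error: "\<And>N. \<bar>x - r N\<bar> \<le> K * err N"
  shows "\<not> algebraic x"
proof (rule not_algebraic_if_rapid_rational_approx[where Q = "\<lambda>N. of_int (denom N)"])
  show "(\<lambda>N. \<bar>x - r N\<bar> * of_int (denom N) ^ k) \<longlonglongrightarrow> 0" for k
  proof (rule tendsto_0_le[OF err_mult_denom_power_tendsto_0, where K = K], intro always_eventually allI)
    fix N
    have "\<bar>x - r N\<bar> * of_int (denom N) ^ k \<le> K * err N * of_int (denom N) ^ k"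
      using error[of N] denom_ge_1[of N] by (intro mult_right_mono) auto
    then show "norm (\<bar>x - r N\<bar> * of_int (denom N) ^ k) \<le> norm (err N * of_int (denom N) ^ k) * K"
      using err_pos[of N] denom_ge_1[of N] by (simp add: abs_mult ac_simps)
  qed
qed (use assms in auto)

lemma partials_eq_int_div:
  obtains P1 P2 :: int where "1 \<le> P2" "P2 \<le> g2 ^ A N"
    "L1.partial N = of_int P1 / of_int g1 ^ A N" "L2.partial N = of_int P2 / of_int g2 ^ A N"
  using L1.partial_eq_int_div[of N] L2.partial_eq_int_div[of N] by blast

lemma of_int_denom: "of_int (denom N) = (of_int g1 ^ A N * of_int g2 ^ A N :: real)"
  by (simp add: denom_def power_mult_distrib)

lemma not_algebraic_total_add: "\<not> algebraic (L1.total + L2.total)"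
proof (rule not_algebraic_if_approx[where r = "\<lambda>N. L1.partial N + L2.partial N" and K = 4])
  fix N
  obtain P1 P2 where P: "L1.partial N = of_int P1 / of_int g1 ^ A N"
      "L2.partial N = of_int P2 / of_int g2 ^ A N"
    by (rule partials_eq_int_div)
  have "L1.partial N + L2.partial N = of_int (P1 * g2 ^ A N + P2 * g1 ^ A N) / of_int (denom N)"
    by (simp add: P of_int_denom add_frac_eq[OF L1.base_power_nonzero L2.base_power_nonzero])
  with denom_ge_1[of N]
  show "\<exists>p q :: int. 1 \<le> q \<and> q \<le> denom N \<and> L1.partial N + L2.partial N = of_int p / of_int q"
    by blast
  show "\<bar>L1.total + L2.total - (L1.partial N + L2.partial N)\<bar> \<le> 4 * err N"
    using tail1_le_err[of N] tail2_le_err[of N] L1.tail_pos[of N] L2.tail_pos[of N]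
    by (simp add: L1.tail_def L2.tail_def)
next
  show "eventually (\<lambda>N. L1.partial N + L2.partial N \<noteq> L1.total + L2.total) sequentially"
  proof (intro always_eventually allI)
    show "L1.partial N + L2.partial N \<noteq> L1.total + L2.total" for N
      using L1.tail_pos[of N] L2.tail_pos[of N] by (simp add: L1.tail_def L2.tail_def)
  qed
qed

lemma not_algebraic_total_diff: "\<not> algebraic (L1.total - L2.total)"
proof (rule not_algebraic_if_approx[where r = "\<lambda>N. L1.partial N - L2.partial N" and K = 2])
  fix N
  obtain P1 P2 where P: "L1.partial N = of_int P1 / of_int g1 ^ A N"
      "L2.partial N = of_int P2 / of_int g2 ^ A N"
    by (rule partials_eq_int_div)
  have "L1.partial N - L2.partial N = of_int (P1 * g2 ^ A N - P2 * g1 ^ A N) / of_int (denom N)"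
    by (simp add: P of_int_denom diff_frac_eq[OF L1.base_power_nonzero L2.base_power_nonzero])
  with denom_ge_1[of N]
  show "\<exists>p q :: int. 1 \<le> q \<and> q \<le> denom N \<and> L1.partial N - L2.partial N = of_int p / of_int q"
    by blast
  show "\<bar>L1.total - L2.total - (L1.partial N - L2.partial N)\<bar> \<le> 2 * err N"
    using tail1_le_err[of N] tail2_le_err[of N] L1.tail_pos[of N] L2.tail_pos[of N]
    by (simp add: L1.tail_def L2.tail_def abs_le_iff)
next
  show "eventually (\<lambda>N. L1.partial N - L2.partial N \<noteq> L1.total - L2.total) sequentially"
    using eventually_tail1_less_err[of 1, OF zero_less_one]
  proof eventually_elim
    case (elim N)
    then show ?case
      using err_le_tail2[of N] by (simp add: L1.tail_def L2.tail_def)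
  qed
qed

lemma total_mult_minus_partial_mult_bounds:
  "0 < L1.total * L2.total - L1.partial N * L2.partial N"
  "L1.total * L2.total - L1.partial N * L2.partial N \<le> 6 * err N"
proof -
  define S1 S2 T1 T2 where "S1 = L1.partial N" "S2 = L2.partial N" "T1 = L1.tail N" "T2 = L2.tail N"
  have expand: "L1.total * L2.total - L1.partial N * L2.partial N = S1 * T2 + T1 * S2 + T1 * T2"
    by (simp add: S1_S2_T1_T2_def L1.tail_def L2.tail_def algebra_simps)
  have "0 < S1" "S1 \<le> 1" "0 < S2" "S2 \<le> 1" "0 < T1" "T1 \<le> 2 * err N" "0 < T2" "T2 \<le> 2 * err N"
    "T2 \<le> 1"
    using L1.partial_pos L1.partial_le_1 L2.partial_pos L2.partial_le_1 L1.tail_pos L2.tail_pos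
      tail1_le_err tail2_le_err L2.tail_less_1 less_imp_le
    unfolding S1_S2_T1_T2_def by blast+
  then have "S1 * T2 \<le> T2" "T1 * S2 \<le> T1" "T1 * T2 \<le> T1" "0 < S1 * T2" "0 < T1 * S2" "0 < T1 * T2"
    by (simp_all add: mult_left_le_one_le mult_left_le)
  then show "0 < L1.total * L2.total - L1.partial N * L2.partial N"
    and "L1.total * L2.total - L1.partial N * L2.partial N \<le> 6 * err N"
    using expand \<open>T1 \<le> 2 * err N\<close> \<open>T2 \<le> 2 * err N\<close> by linarith+
qed

lemma not_algebraic_total_mult: "\<not> algebraic (L1.total * L2.total)"
proof (rule not_algebraic_if_approx[where r = "\<lambda>N. L1.partial N * L2.partial N" and K = 6])
  fix N
  obtain P1 P2 where P: "L1.partial N = of_int P1 / of_int g1 ^ A N"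
      "L2.partial N = of_int P2 / of_int g2 ^ A N"
    by (rule partials_eq_int_div)
  have "L1.partial N * L2.partial N = of_int (P1 * P2) / of_int (denom N)"
    by (simp add: P of_int_denom)
  with denom_ge_1[of N]
  show "\<exists>p q :: int. 1 \<le> q \<and> q \<le> denom N \<and> L1.partial N * L2.partial N = of_int p / of_int q"
    by blast
  show "\<bar>L1.total * L2.total - L1.partial N * L2.partial N\<bar> \<le> 6 * err N"
    using total_mult_minus_partial_mult_bounds[of N] by simp
next
  show "eventually (\<lambda>N. L1.partial N * L2.partial N \<noteq> L1.total * L2.total) sequentially"
  proof (intro always_eventually allI)
    show "L1.partial N * L2.partial N \<noteq> L1.total * L2.total" for N
      using total_mult_minus_partial_mult_bounds(1)[of N] by linarith
  qed
qed

lemma total_div_minus_partial_div_eq: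
  "L1.total / L2.total - L1.partial N / L2.partial N
    = (L1.tail N * L2.partial N - L1.partial N * L2.tail N) / (L2.total * L2.partial N)"
proof -
  have "L2.partial N > 0" "L2.total > 0"
    using L2.partial_pos[of N] L2.tail_pos[of N] by (simp_all add: L2.tail_def)
  then show ?thesis
    by (simp add: L1.tail_def L2.tail_def field_simps)
qed

lemma total_div_minus_partial_div_bound:
  "\<bar>L1.total / L2.total - L1.partial N / L2.partial N\<bar> \<le> 2 * (of_int g2 ^ A 0) ^ 2 * err N"
proof -
  define m :: real where "m = 1 / of_int g2 ^ A 0"
  have "m > 0" using L2.base_power_pos by (simp add: m_def)
  have "m \<le> L2.partial N" "L2.partial N \<le> L2.total"
    using L2.partial_ge[of N] L2.tail_pos[of N] by (simp_all add: m_def L2.tail_def)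
  then have den: "m * m \<le> L2.total * L2.partial N"
    using \<open>m > 0\<close> by (intro mult_mono) auto
  moreover have "0 < m * m"
    using \<open>m > 0\<close> by simp
  ultimately have den_pos: "0 < L2.total * L2.partial N"
    by linarith
  have "L1.tail N * L2.partial N \<le> L1.tail N" "L1.partial N * L2.tail N \<le> L2.tail N"
    using L1.tail_pos[of N] L2.tail_pos[of N] L1.partial_pos[of N] L2.partial_pos[of N]
      L1.partial_le_1[of N] L2.partial_le_1[of N]
    by (simp_all add: mult_left_le mult_left_le_one_le)
  moreover have "0 < L1.tail N * L2.partial N" "0 < L1.partial N * L2.tail N"
    using L1.tail_pos[of N] L2.tail_pos[of N] L1.partial_pos[of N] L2.partial_pos[of N] by simp_all
  ultimately have num: "\<bar>L1.tail N * L2.partial N - L1.partial N * L2.tail N\<bar> \<le> 2 * err N"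
    using tail1_le_err[of N] tail2_le_err[of N] by linarith
  have "\<bar>L1.total / L2.total - L1.partial N / L2.partial N\<bar>
      = \<bar>L1.tail N * L2.partial N - L1.partial N * L2.tail N\<bar> / (L2.total * L2.partial N)"
    using den_pos by (simp add: total_div_minus_partial_div_eq abs_divide)
  also have "\<dots> \<le> 2 * err N / (m * m)"
    using num den \<open>m > 0\<close> by (intro frac_le) auto
  also have "\<dots> = 2 * (of_int g2 ^ A 0) ^ 2 * err N"
    using L2.base_power_nonzero by (simp add: m_def power2_eq_square)
  finally show ?thesis .
qed

lemma not_algebraic_total_div: "\<not> algebraic (L1.total / L2.total)"
proof (rule not_algebraic_if_approx[where r = "\<lambda>N. L1.partial N / L2.partial N"])
  fix N
  obtain P1 P2 where P: "1 \<le> P2" "P2 \<le> g2 ^ A N" "L1.partial N = of_int P1 / of_int g1 ^ A N"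
      "L2.partial N = of_int P2 / of_int g2 ^ A N"
    by (rule partials_eq_int_div)
  have "L1.partial N / L2.partial N = of_int (P1 * g2 ^ A N) / of_int (P2 * g1 ^ A N)"
    using P(1) L1.base_power_nonzero L2.base_power_nonzero by (simp add: P(3,4) field_simps)
  moreover have "1 \<le> P2 * g1 ^ A N"
    using P(1) g2_ge_2 g2_less_g1 mult_mono[of 1 P2 1 "g1 ^ A N"] by (simp add: one_le_power)
  moreover have "P2 * g1 ^ A N \<le> denom N"
    using P(2) g2_ge_2 g2_less_g1 by (simp add: denom_def power_mult_distrib mult.commute)
  ultimately show "\<exists>p q :: int. 1 \<le> q \<and> q \<le> denom N \<and> L1.partial N / L2.partial N = of_int p / of_int q"
    by blast
next
  show "\<bar>L1.total / L2.total - L1.partial N / L2.partial N\<bar> \<le> 2 * (of_int g2 ^ A 0) ^ 2 * err N" for N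
    by (rule total_div_minus_partial_div_bound)
next
  have "eventually (\<lambda>N. L1.tail N < 1 / of_int g1 ^ A 0 * err N) sequentially"
    using L1.base_power_pos by (intro eventually_tail1_less_err) simp
  then show "eventually (\<lambda>N. L1.partial N / L2.partial N \<noteq> L1.total / L2.total) sequentially"
  proof eventually_elim
    case (elim N)
    have "L1.tail N * L2.partial N \<le> L1.tail N"
      using L1.tail_pos[of N] L2.partial_le_1[of N] by (simp add: mult_left_le)
    also have "\<dots> < 1 / of_int g1 ^ A 0 * err N"
      using elim L1.base_power_pos by simp
    also have "\<dots> \<le> L1.partial N * L2.tail N"
      using L1.partial_ge[of N] L1.partial_pos[of N] err_le_tail2[of N] err_pos[of N]
      by (intro mult_mono) auto
    finally have "L1.tail N * L2.partial N - L1.partial N * L2.tail N \<noteq> 0"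
      by simp
    moreover have "L2.total * L2.partial N \<noteq> 0"
      using L2.partial_pos[of N] L2.tail_pos[of N] by (simp add: L2.tail_def)
    ultimately have "L1.total / L2.total - L1.partial N / L2.partial N \<noteq> 0"
      by (simp add: total_div_minus_partial_div_eq)
    then show ?case
      by simp
  qed
qed

end

theorem theorem1:
  fixes g1 g2 :: int and \<beta> :: real and a :: "nat \<Rightarrow> nat"
    and \<theta>1 \<theta>2 :: real
  assumes "g1 > g2" and "g2 \<ge> 2"
    and "\<beta> > 0"
    and "\<forall>n\<ge>1. a n > 0"
    and "a 1 \<ge> 2"
    and "\<forall>n\<ge>1. real (a (n + 1)) = real (a n) powr (1 + \<beta>)"
    and "\<theta>1 = (\<Sum>n. 1 / real_of_int g1 ^ a (n + 1))"
    and "\<theta>2 = (\<Sum>n. 1 / real_of_int g2 ^ a (n + 1))"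
  shows "\<not> algebraic (\<theta>1 + \<theta>2) \<and> \<not> algebraic (\<theta>1 - \<theta>2)
       \<and> \<not> algebraic (\<theta>1 * \<theta>2) \<and> \<not> algebraic (\<theta>1 / \<theta>2)"
proof -
  define A where "A n = a (Suc n)" for n
  interpret lacunary_pair g1 g2 \<beta> A
  proof
    show "A 0 \<ge> 2"
      using assms(5) by (simp add: A_def)
    show "real (A (Suc n)) = real (A n) powr (1 + \<beta>)" for n
      using assms(6)[rule_format, of "Suc n"] by (simp add: A_def)
  qed (use assms(1-3) in auto)
  have "\<theta>1 = L1.total" "\<theta>2 = L2.total"
    using assms(7,8) by (simp_all add: A_def L1.total_def L2.total_def)
  then show ?thesis
    using not_algebraic_total_add not_algebraic_total_diff not_algebraic_total_mult
      not_algebraic_total_div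
    by simp
qed

end
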